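(* Let $X$ be a Banach space and $k\in\mathbb{N}$. Every bounded $k$-sequence $(x_s)_{s\in[\mathbb{N}]^k}$ in $X$ (i.e. $\sup_s\|x_s\|<\infty$) admits a $k$-spreading model: there exist an infinite $M\subseteq\mathbb{N}$ and a seminorm $\|\cdot\|_*$ on $c_{00}(\mathbb{N})$ such that $(x_s)_{s\in[M]^k}$ generates the natural Hamel basis $(e_n)_n$ of $(c_{00}(\mathbb{N}),\|\cdot\|_* )$ as a $k$-spreading model.
   Context: $[M]^k$ denotes the $k$-element subsets of $M\subseteq\mathbb{N}$, each $s$ identified with its increasing enumeration $s(1)<\dots<s(k)$; $M(n)$ denotes the $n$-th element of $M$. A $k$-sequence in $X$ is a map $[\mathbb{N}]^k\to X$, written $(x_s)_{s\in[\mathbb{N}]^k}$; its restriction to $[M]^k$ is written $(x_s)_{s\in[M]^k}$. A finite sequence $(s_j)_{j=1}^l$ in $[M]^k$ is a plegma family if $s_1(i)<\dots<s_l(i)$ for every $1\le i\le k$ and $s_l(i)<s_1(i+1)$ for every $1\le i<k$; $\mathrm{Plm}_l([M]^k)$ is the set of such families of length $l$. Given an infinite-dimensional seminormed space $(E,\|\cdot\|_* )$ with Hamel basis $(e_n)_n$, we say $(x_s)_{s\in[M]^k}$ generates $(e_n)_n$ as a $k$-spreading model if there is a null sequence $(\delta_n)$ of positive reals such that for all $m\le l$, all $(s_j)_{j=1}^m\in\mathrm{Plm}_m([M]^k)$ with $s_1(1)\ge M(l)$ and all $a_1,\dots,a_m\in[-1,1]$: $\big|\|\sum_{j=1}^m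 a_jx_{s_j}\|-\|\sum_{j=1}^m a_je_j\|_*\big|\le\delta_l$. A $k$-sequence admits $(e_n)$ as a $k$-spreading model if some $(x_s)_{s\in[M]^k}$ generates it. *)

theory Defs
  imports "HOL-Analysis.Analysis" "HOL-Library.Infinite_Set"
begin

definition ksubsets :: "nat set \<Rightarrow> nat \<Rightarrow> nat set set" where
  "ksubsets M k = {s. s \<subseteq> M \<and> finite s \<and> card s = k}"

definition elem :: "nat set \<Rightarrow> nat \<Rightarrow> nat" where
  "elem s i = sorted_list_of_set s ! (i - 1)"

definition nth_el :: "nat set \<Rightarrow> nat \<Rightarrow> nat" where
  "nth_el M n = enumerate M (n - 1)"

definition plegma :: "nat \<Rightarrow> nat set \<Rightarrow> nat \<Rightarrow> (nat \<Rightarrow> nat set) \<Rightarrow> bool" where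
  "plegma l M k F \<longleftrightarrow>
     (\<forall>j\<in>{1..l}. F j \<in> ksubsets M k) \<and>
     (\<forall>i\<in>{1..k}. \<forall>j\<in>{1..<l}. elem (F j) i < elem (F (Suc j)) i) \<and>
     (\<forall>i\<in>{1..<k}. elem (F l) i < elem (F 1) (Suc i))"

text \<open>c00(N): finitely supported real sequences; coordinate j-1 corresponds to e_j.\<close>
definition c00 :: "(nat \<Rightarrow> real) set" where
  "c00 = {f. finite {i. f i \<noteq> 0}}"

definition seminorm_c00 :: "((nat \<Rightarrow> real) \<Rightarrow> real) \<Rightarrow> bool" where
  "seminorm_c00 N \<longleftrightarrow>
     (\<forall>f\<in>c00. 0 \<le> N f) \<and>
     (\<forall>f\<in>c00. \<forall>c. N (\<lambda>i. c * f i) = \<bar>c\<bar> * N f) \<and>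
     (\<forall>f\<in>c00. \<forall>g\<in>c00. N (\<lambda>i. f i + g i) \<le> N f + N g)"

text \<open>The vector \<Sum>_{j=1}^m a_j e_j of c00, where e_j is the unit vector at coordinate j-1.\<close>
definition comb_e :: "nat \<Rightarrow> (nat \<Rightarrow> real) \<Rightarrow> (nat \<Rightarrow> real)" where
  "comb_e m a = (\<lambda>i. if i < m then a (Suc i) else 0)"

definition generates_ksm ::
  "(nat set \<Rightarrow> 'a::real_normed_vector) \<Rightarrow> nat set \<Rightarrow> nat \<Rightarrow> ((nat \<Rightarrow> real) \<Rightarrow> real) \<Rightarrow> bool" where
  "generates_ksm x M k N \<longleftrightarrow>
     (\<exists>\<delta>::nat \<Rightarrow> real. (\<forall>n. 0 < \<delta> n) \<and> \<delta> \<longlonglongrightarrow> 0 \<and>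
       (\<forall>l m F a. 1 \<le> m \<and> m \<le> l \<and> plegma m M k F \<and> elem (F 1) 1 \<ge> nth_el M l \<and>
          (\<forall>j\<in>{1..m}. \<bar>a j\<bar> \<le> 1) \<longrightarrow>
          \<bar>norm (\<Sum>j=1..m. a j *\<^sub>R x (F j)) - N (comb_e m a)\<bar> \<le> \<delta> l))"

end

theory Submission
  imports Defs "HOL-Library.Ramsey"
begin

text \<open>
  A plegma family (F 1, ..., F m) in [M]^k is the same thing as a (k*m)-element subset S of M
  read column by column: F j consists of the elements of S at positions j, j+m, ..., j+(k-1)m.
  Hence, for a fixed length m and fixed coefficients, the norm of a plegma combination
  \<Sum> a j x(F j) is a bounded function of (k*m)-subsets of M, and Ramsey's theorem yields an
  infinite M' on which it oscillates by at most e; approximating the coefficients by a finite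
  grid, the same M' works for all coefficients in [-1,1] (M' is then called "stable").
  Iterating and diagonalising gives a strictly increasing sequence ds whose n-th tail is
  1/(n+1)-stable for all lengths m \<le> n+1.  Along the diagonal plegma families of ds the norms
  of \<Sum> f(j-1) x(F j) then form Cauchy sequences for every f in c00; their limit N is a
  seminorm, and the stability of the tails gives exactly the estimates required for
  (x_s) restricted to [range ds]^k to generate the unit vector basis of (c00, N).
\<close>

definition strict_on :: "nat \<Rightarrow> (nat \<Rightarrow> nat) \<Rightarrow> bool" where
  "strict_on n u \<longleftrightarrow> (\<forall>p q. p < q \<longrightarrow> q < n \<longrightarrow> u p < u q)"

lemma strict_on_step:
  assumes "\<And>p. Suc p < n \<Longrightarrow> u p < u (Suc p)"
  shows "strict_on n u"
  unfolding strict_on_def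
proof (intro allI impI)
  fix p q assume "p < q" "q < n"
  then show "u p < u q"
  proof (induction q)
    case (Suc q)
    then show ?case using assms by (metis Suc_lessD less_Suc_eq order.strict_trans)
  qed simp
qed

lemma strict_on_inj: "strict_on n u \<Longrightarrow> inj_on u {0..<n}"
  unfolding inj_on_def strict_on_def by (metis atLeastLessThan_iff less_irrefl nat_neq_iff)

lemma elem_image_strict:
  assumes "strict_on n u" "p < n"
  shows "elem (u ` {0..<n}) (Suc p) = u p"
proof -
  have "sorted_wrt (<) (map u [0..<n])"
    using assms(1) unfolding sorted_wrt_iff_nth_less strict_on_def by auto
  moreover have "length (map u [0..<n]) = card (u ` {0..<n})"
    using card_image[OF strict_on_inj[OF assms(1)]] by simp
  ultimately have "sorted_list_of_set (u ` {0..<n}) = map u [0..<n]"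
    using sorted_list_of_set_unique[of "u ` {0..<n}" "map u [0..<n]"] by auto
  then show ?thesis using assms(2) by (simp add: elem_def)
qed

definition enum_fin :: "nat set \<Rightarrow> nat \<Rightarrow> nat" where
  "enum_fin S = (\<lambda>p. elem S (Suc p))"

lemma enum_fin_strict:
  assumes "finite S" "card S = n"
  shows "strict_on n (enum_fin S)" "\<forall>p<n. enum_fin S p \<in> S"
proof -
  have sorted: "sorted_wrt (<) (sorted_list_of_set S)" by simp
  have len: "length (sorted_list_of_set S) = n" using assms by simp
  show "strict_on n (enum_fin S)" unfolding strict_on_def enum_fin_def elem_def
    using sorted len unfolding sorted_wrt_iff_nth_less by auto
  show "\<forall>p<n. enum_fin S p \<in> S"
  proof (intro allI impI)
    fix p assume "p < n"
    then have "sorted_list_of_set S ! p \<in> set (sorted_list_of_set S)" using len by simp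
    then show "enum_fin S p \<in> S" unfolding enum_fin_def elem_def using assms(1) by simp
  qed
qed

lemma elem_set:
  assumes "finite s" "card s = k"
  shows "elem s ` {1..k} = s"
proof -
  let ?xs = "sorted_list_of_set s"
  have "s = set ?xs" using assms by simp
  also have "\<dots> = (\<lambda>i. ?xs ! i) ` {0..<k}"
    using assms by (simp add: set_conv_nth atLeast0LessThan) blast
  also have "\<dots> = elem s ` {1..k}" unfolding elem_def
    by (force simp: image_iff intro: rev_bexI[of "_ - 1"])
  finally show ?thesis by simp
qed

section \<open>Plegma families as interlaced enumerations\<close>

definition interlace :: "nat \<Rightarrow> (nat \<Rightarrow> nat) \<Rightarrow> nat \<Rightarrow> nat \<Rightarrow> nat set" where
  "interlace k u m j = (\<lambda>i. u ((i-1)*m + (j-1))) ` {1..k}"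

lemma interlace_alt: "interlace k u m j = (\<lambda>i. u (i*m + (j-1))) ` {0..<k}"
  unfolding interlace_def
  by (force simp: image_iff intro: rev_bexI[of "_ - 1"] rev_bexI[of "Suc _"])

lemma interlace_index_bound:
  fixes i k j m :: nat
  assumes "i < k" "1 \<le> j" "j \<le> m"
  shows "i*m + (j-1) < k*m"
proof -
  have "j - 1 < m" using assms by simp
  then have "i*m + (j-1) < i*m + m" by simp
  also have "\<dots> = Suc i * m" by simp
  also have "\<dots> \<le> k*m" using assms by (intro mult_le_mono1) simp
  finally show ?thesis .
qed

lemma interlace_cong:
  assumes "\<forall>p<k*m. u p = v p" "j \<in> {1..m}"
  shows "interlace k u m j = interlace k v m j"
  unfolding interlace_alt
proof (rule image_cong[OF refl])
  fix i assume "i \<in> {0..<k}"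
  then have "i*m + (j-1) < k*m" using interlace_index_bound[of i k j m] assms(2) by auto
  then show "u (i*m + (j-1)) = v (i*m + (j-1))" using assms(1) by blast
qed

lemma interlace_row_strict:
  assumes "strict_on (k*m) u" "1 \<le> j" "j \<le> m"
  shows "strict_on k (\<lambda>i. u (i*m + (j-1)))"
  unfolding strict_on_def
proof (intro allI impI)
  fix p q assume pq: "p < q" "q < k"
  have "0 < m" using assms by simp
  then have "p*m + (j-1) < q*m + (j-1)" using pq by simp
  then show "u (p*m + (j-1)) < u (q*m + (j-1))"
    using assms(1) interlace_index_bound[OF pq(2) assms(2,3)] unfolding strict_on_def by blast
qed

lemma interlace_elem:
  assumes "strict_on (k*m) u" "1 \<le> j" "j \<le> m" "1 \<le> i" "i \<le> k"
  shows "elem (interlace k u m j) i = u ((i-1)*m + (j-1))"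
  using elem_image_strict[OF interlace_row_strict[OF assms(1-3)], of "i-1"] assms
  by (simp add: interlace_alt)

lemma interlace_ksubset:
  assumes "strict_on (k*m) u" "\<forall>p<k*m. u p \<in> M" "1 \<le> j" "j \<le> m"
  shows "interlace k u m j \<in> ksubsets M k"
proof -
  have "card (interlace k u m j) = k"
    unfolding interlace_alt
    using card_image[OF strict_on_inj[OF interlace_row_strict[OF assms(1,3,4)]]] by simp
  moreover have "interlace k u m j \<subseteq> M"
  proof
    fix y assume "y \<in> interlace k u m j"
    then obtain i where "i < k" "y = u (i*m + (j-1))" unfolding interlace_alt by auto
    then show "y \<in> M" using assms(2-4) interlace_index_bound[of i k j m] by auto
  qed
  ultimately show ?thesis unfolding ksubsets_def interlace_def by auto
qed

lemma interlace_plegma: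
  assumes "strict_on (k*m) u" "\<forall>p<k*m. u p \<in> M" "1 \<le> m" "1 \<le> k"
  shows "plegma m M k (interlace k u m)"
  unfolding plegma_def
proof (intro conjI ballI)
  fix j assume "j \<in> {1..m}"
  then show "interlace k u m j \<in> ksubsets M k" using interlace_ksubset[OF assms(1,2)] by auto
next
  fix i j assume ij: "i \<in> {1..k}" "j \<in> {1..<m}"
  have "(i-1)*m + j < k*m" using interlace_index_bound[of "i-1" k "Suc j" m] ij by auto
  then have "u ((i-1)*m + (j-1)) < u ((i-1)*m + (Suc j - 1))"
    using assms(1) ij unfolding strict_on_def by auto
  then show "elem (interlace k u m j) i < elem (interlace k u m (Suc j)) i"
    using interlace_elem[OF assms(1)] ij by auto
next
  fix i assume i: "i \<in> {1..<k}"
  have "(i-1)*m + (m-1) < i*m" using i assms by (cases i) auto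
  moreover have "i*m < k*m" using i assms by simp
  ultimately have "u ((i-1)*m + (m-1)) < u ((Suc i - 1)*m + (1-1))"
    using assms(1) unfolding strict_on_def by auto
  then show "elem (interlace k u m m) i < elem (interlace k u m 1) (Suc i)"
    using interlace_elem[OF assms(1)] i assms by auto
qed

definition column_seq :: "(nat \<Rightarrow> nat set) \<Rightarrow> nat \<Rightarrow> nat \<Rightarrow> nat" where
  "column_seq F m p = elem (F (p mod m + 1)) (p div m + 1)"

text \<open>The column-wise reading of a plegma family is strictly increasing: inside a row the
  plegma condition on rows applies, and from the end of a row to the start of the next one the
  condition linking F m to F 1 applies.\<close>
lemma column_seq_strict:
  assumes "plegma m M k F" "1 \<le> m"
  shows "strict_on (k*m) (column_seq F m)"
proof (rule strict_on_step)
  have rows: "\<forall>i\<in>{1..k}. \<forall>j\<in>{1..<m}. elem (F j) i < elem (F (Suc j)) i"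
   and cols: "\<forall>i\<in>{1..<k}. elem (F m) i < elem (F 1) (Suc i)"
    using assms(1) unfolding plegma_def by auto
  have mpos: "m > 0" using assms by simp
  fix p assume sp: "Suc p < k*m"
  then have divk: "Suc p div m < k" "p div m < k"
    by (metis div_less_iff_less_mult mpos, metis Suc_lessD div_less_iff_less_mult mpos)
  show "column_seq F m p < column_seq F m (Suc p)"
  proof (cases "Suc (p mod m) = m")
    case True
    then have "Suc p mod m = 0" "Suc p div m = Suc (p div m)"
      by (simp_all add: mod_Suc div_Suc)
    then show ?thesis unfolding column_seq_def using divk True cols by auto
  next
    case False
    then have "Suc p mod m = Suc (p mod m)" "Suc p div m = p div m"
      by (simp_all add: mod_Suc div_Suc)
    moreover have "p mod m + 1 < m" using False mod_less_divisor[OF mpos, of p] by linarith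
    ultimately show ?thesis unfolding column_seq_def using divk rows by auto
  qed
qed

lemma plegma_interlace:
  assumes "plegma m M k F" "1 \<le> m"
  defines "u \<equiv> column_seq F m"
  shows "strict_on (k*m) u" "\<forall>p<k*m. u p \<in> M" "\<forall>j\<in>{1..m}. F j = interlace k u m j"
proof -
  show "strict_on (k*m) u" unfolding u_def using assms(1,2) by (rule column_seq_strict)
  have F: "F j \<in> ksubsets M k" if "j \<in> {1..m}" for j
    using assms(1) that unfolding plegma_def by auto
  have mpos: "m > 0" using assms by simp
  show "\<forall>p<k*m. u p \<in> M"
  proof (intro allI impI)
    fix p assume p: "p < k*m"
    have j: "p mod m + 1 \<in> {1..m}" using mod_less_divisor[OF mpos, of p] by auto
    have "p div m + 1 \<le> k" using p by (simp add: div_less_iff_less_mult mpos Suc_le_eq)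
    then have "u p \<in> elem (F (p mod m + 1)) ` {1..k}" unfolding u_def column_seq_def by auto
    then show "u p \<in> M" using F[OF j] elem_set by (auto simp: ksubsets_def)
  qed
  show "\<forall>j\<in>{1..m}. F j = interlace k u m j"
  proof
    fix j assume j: "j \<in> {1..m}"
    have "interlace k u m j = elem (F j) ` {1..k}" unfolding interlace_def
    proof (rule image_cong[OF refl])
      fix i assume i: "i \<in> {1..k}"
      have divmod: "(q*m + r) mod m = r \<and> (q*m + r) div m = q" if "r < m" for q r
        using that by auto
      have "j - 1 < m" using j by auto
      then have A: "((i-1)*m + (j-1)) mod m = j - 1" and B: "((i-1)*m + (j-1)) div m = i - 1"
        using divmod by blast+
      have "u ((i-1)*m + (j-1)) = elem (F (j-1+1)) (i-1+1)"
        unfolding u_def column_seq_def A B by (rule refl)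
      then show "u ((i-1)*m + (j-1)) = elem (F j) i"
        using i j by simp
    qed
    also have "\<dots> = F j" using F[OF j] elem_set by (auto simp: ksubsets_def)
    finally show "F j = interlace k u m j" by simp
  qed
qed

lemma plegma_as_interlace:
  assumes "plegma m M k F" "1 \<le> m"
  shows "\<exists>S\<in>ksubsets M (k*m). \<forall>j\<in>{1..m}. F j = interlace k (enum_fin S) m j"
proof -
  let ?u = "column_seq F m"
  note P = plegma_interlace[OF assms(1,2)]
  define S where "S = ?u ` {0..<k*m}"
  have "card S = k*m" unfolding S_def using card_image[OF strict_on_inj[OF P(1)]] by simp
  moreover have "S \<subseteq> M" unfolding S_def using P(2) by auto
  ultimately have "S \<in> ksubsets M (k*m)" unfolding ksubsets_def S_def by auto
  moreover have "\<forall>p<k*m. enum_fin S p = ?u p"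
    unfolding enum_fin_def S_def using elem_image_strict P(1) by blast
  then have "\<forall>j\<in>{1..m}. F j = interlace k (enum_fin S) m j" using P(3) interlace_cong by metis
  ultimately show ?thesis by blast
qed

lemma plegma_mono: "plegma m M k F \<Longrightarrow> M \<subseteq> M' \<Longrightarrow> plegma m M' k F"
  unfolding plegma_def ksubsets_def by blast

lemma plegma_cong:
  assumes "\<forall>j\<in>{1..m}. F j = G j" "1 \<le> m"
  shows "plegma m M k F = plegma m M k G"
proof -
  have "F m = G m" "F 1 = G 1" "\<forall>j\<in>{1..<m}. F j = G j \<and> F (Suc j) = G (Suc j)"
    using assms by auto
  then show ?thesis unfolding plegma_def using assms(1) by auto
qed

lemma plegma_trunc:
  assumes "plegma n M k G" "1 \<le> m" "m \<le> n"
  shows "plegma m M k G"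
proof -
  have rows: "\<forall>i\<in>{1..k}. \<forall>j\<in>{1..<n}. elem (G j) i < elem (G (Suc j)) i"
   and cols: "\<forall>i\<in>{1..<k}. elem (G n) i < elem (G 1) (Suc i)"
    using assms(1) unfolding plegma_def by auto
  have le: "elem (G m) i \<le> elem (G j) i" if "i \<in> {1..k}" "m \<le> j" "j \<le> n" for i j
    using that
  proof (induction j)
    case (Suc j)
    show ?case
    proof (cases "m = Suc j")
      case False
      then have "m \<le> j" using Suc by simp
      then have "elem (G m) i \<le> elem (G j) i" using Suc by simp
      moreover have "elem (G j) i < elem (G (Suc j)) i" using rows Suc \<open>m \<le> j\<close> assms(2) by auto
      ultimately show ?thesis by simp
    qed simp
  qed simp
  show ?thesis unfolding plegma_def
  proof (intro conjI ballI)
    fix j assume "j \<in> {1..m}"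
    then show "G j \<in> ksubsets M k" using assms unfolding plegma_def by auto
  next
    fix i j assume "i \<in> {1..k}" "j \<in> {1..<m}"
    then show "elem (G j) i < elem (G (Suc j)) i" using rows assms by auto
  next
    fix i assume i: "i \<in> {1..<k}"
    have "elem (G m) i \<le> elem (G n) i" using le[of i n] i assms by auto
    then show "elem (G m) i < elem (G 1) (Suc i)" using cols i by fastforce
  qed
qed

lemma plegma_above:
  assumes "plegma m M k F" "1 \<le> m" "1 \<le> k" "b \<le> elem (F 1) 1"
  shows "plegma m {y\<in>M. b \<le> y} k F"
proof -
  let ?u = "column_seq F m"
  note P = plegma_interlace[OF assms(1,2)]
  have u0: "?u 0 = elem (F 1) 1" unfolding column_seq_def by simp
  have "\<forall>p<k*m. ?u p \<in> {y\<in>M. b \<le> y}"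
  proof (intro allI impI)
    fix p assume p: "p < k*m"
    have "?u 0 \<le> ?u p"
      using P(1) p unfolding strict_on_def by (metis le_refl less_imp_le_nat neq0_conv)
    then show "?u p \<in> {y\<in>M. b \<le> y}" using P(2) p u0 assms(4) by auto
  qed
  from interlace_plegma[OF P(1) this assms(2,3)] show ?thesis
    using plegma_cong[OF P(3) assms(2)] by simp
qed


definition comb_norm ::
  "(nat set \<Rightarrow> 'a::real_normed_vector) \<Rightarrow> (nat \<Rightarrow> nat set) \<Rightarrow> nat \<Rightarrow> (nat \<Rightarrow> real) \<Rightarrow> real" where
  "comb_norm x F m a = norm (\<Sum>j=1..m. a j *\<^sub>R x (F j))"

lemma comb_norm_cong:
  "\<forall>j\<in>{1..m}. F j = G j \<Longrightarrow> \<forall>j\<in>{1..m}. a j = b j \<Longrightarrow> comb_norm x F m a = comb_norm x G m b"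
  unfolding comb_norm_def by (metis (no_types, lifting) sum.cong)

lemma comb_norm_scale: "comb_norm x F m (\<lambda>j. c * a j) = \<bar>c\<bar> * comb_norm x F m a"
proof -
  have "(\<Sum>j=1..m. (c * a j) *\<^sub>R x (F j)) = c *\<^sub>R (\<Sum>j=1..m. a j *\<^sub>R x (F j))"
    by (simp add: scaleR_sum_right)
  then show ?thesis unfolding comb_norm_def by simp
qed

lemma comb_norm_add: "comb_norm x F m (\<lambda>j. a j + b j) \<le> comb_norm x F m a + comb_norm x F m b"
proof -
  have "(\<Sum>j=1..m. (a j + b j) *\<^sub>R x (F j))
      = (\<Sum>j=1..m. a j *\<^sub>R x (F j)) + (\<Sum>j=1..m. b j *\<^sub>R x (F j))"
    by (simp add: scaleR_add_left sum.distrib)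
  then show ?thesis unfolding comb_norm_def by (simp add: norm_triangle_ineq)
qed

lemma comb_norm_bound:
  assumes "plegma m M k F" "\<forall>s\<in>ksubsets UNIV k. norm (x s) \<le> C" "\<forall>j\<in>{1..m}. \<bar>a j\<bar> \<le> B"
  shows "comb_norm x F m a \<le> m * (B * C)"
proof -
  have "comb_norm x F m a \<le> (\<Sum>j=1..m. norm (a j *\<^sub>R x (F j)))"
    unfolding comb_norm_def by (rule norm_sum)
  also have "\<dots> \<le> (\<Sum>j=1..m. B * C)"
  proof (rule sum_mono)
    fix j assume j: "j \<in> {1..m}"
    then have "F j \<in> ksubsets UNIV k" using assms(1) unfolding plegma_def ksubsets_def by auto
    then have "\<bar>a j\<bar> * norm (x (F j)) \<le> B * C"
      using assms(2,3) j by (intro mult_mono) auto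
    then show "norm (a j *\<^sub>R x (F j)) \<le> B * C" by simp
  qed
  finally show ?thesis by simp
qed

lemma comb_norm_lipschitz:
  assumes "plegma m M k F" "\<forall>s\<in>ksubsets UNIV k. norm (x s) \<le> C" "\<forall>j\<in>{1..m}. \<bar>a j - b j\<bar> \<le> B"
  shows "\<bar>comb_norm x F m a - comb_norm x F m b\<bar> \<le> m * (B * C)"
proof -
  have "\<bar>comb_norm x F m a - comb_norm x F m b\<bar>
      \<le> norm ((\<Sum>j=1..m. a j *\<^sub>R x (F j)) - (\<Sum>j=1..m. b j *\<^sub>R x (F j)))"
    unfolding comb_norm_def by (rule norm_triangle_ineq3)
  also have "\<dots> = comb_norm x F m (\<lambda>j. a j - b j)"
    unfolding comb_norm_def by (simp add: sum_subtractf scaleR_diff_left)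
  also have "\<dots> \<le> m * (B * C)" using comb_norm_bound[OF assms(1,2)] assms(3) by simp
  finally show ?thesis .
qed

section \<open>Ramsey stabilisation\<close>

text \<open>A bounded real function on d-subsets of an infinite set oscillates by at most e on the
  d-subsets of some infinite subset: colour by the interval of length e containing the value.\<close>
lemma ramsey_small_oscillation:
  fixes g :: "nat set \<Rightarrow> real"
  assumes "infinite M" "\<forall>S. finite S \<and> card S = d \<longrightarrow> \<bar>g S\<bar> \<le> B" "e > 0"
  shows "\<exists>M'\<subseteq>M. infinite M' \<and> (\<forall>S\<in>ksubsets M' d. \<forall>T\<in>ksubsets M' d. \<bar>g S - g T\<bar> \<le> e)"
proof -
  define c where "c S = nat \<lfloor>(g S + B) / e\<rfloor>" for S
  define s where "s = nat \<lfloor>2 * B / e\<rfloor> + 1"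
  have "\<forall>X. X \<subseteq> M \<and> finite X \<and> card X = d \<longrightarrow> c X < s"
  proof (intro allI impI)
    fix X assume "X \<subseteq> M \<and> finite X \<and> card X = d"
    then have "\<bar>g X\<bar> \<le> B" using assms(2) by auto
    then have "(g X + B) / e \<le> 2 * B / e" using assms(3) by (simp add: divide_right_mono)
    then have "\<lfloor>(g X + B) / e\<rfloor> \<le> \<lfloor>2 * B / e\<rfloor>" by (rule floor_mono)
    then show "c X < s" unfolding c_def s_def by linarith
  qed
  from Ramsey[OF assms(1) this] obtain Y t where Y: "Y \<subseteq> M" "infinite Y"
    "\<forall>X. X \<subseteq> Y \<and> finite X \<and> card X = d \<longrightarrow> c X = t" by blast
  have "\<bar>g S - g T\<bar> \<le> e" if S: "S \<in> ksubsets Y d" and T: "T \<in> ksubsets Y d" for S T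
  proof -
    have "0 \<le> (g S + B) / e" "0 \<le> (g T + B) / e"
      using assms(2,3) S T unfolding ksubsets_def by (auto intro!: divide_nonneg_pos simp: abs_le_iff)
    moreover have "c S = c T" using Y(3) S T unfolding ksubsets_def by auto
    ultimately have "\<lfloor>(g S + B) / e\<rfloor> = \<lfloor>(g T + B) / e\<rfloor>"
      unfolding c_def by (simp add: nat_eq_iff2)
    then have "\<bar>(g S + B) / e - (g T + B) / e\<bar> < 1" by linarith
    moreover have "(g S + B) / e - (g T + B) / e = (g S - g T) / e"
      by (simp add: add_divide_distrib diff_divide_distrib)
    ultimately have "\<bar>g S - g T\<bar> / e < 1" using assms(3) by simp
    then show ?thesis using assms(3) by (simp add: divide_less_eq)
  qed
  then show ?thesis using Y by blast
qed

lemma ramsey_small_oscillation_finite: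
  fixes g :: "'b \<Rightarrow> nat set \<Rightarrow> real"
  assumes "finite A" "infinite M" "\<forall>b\<in>A. \<forall>S. finite S \<and> card S = d \<longrightarrow> \<bar>g b S\<bar> \<le> B" "e > 0"
  shows "\<exists>M'\<subseteq>M. infinite M' \<and>
           (\<forall>b\<in>A. \<forall>S\<in>ksubsets M' d. \<forall>T\<in>ksubsets M' d. \<bar>g b S - g b T\<bar> \<le> e)"
  using assms(1,2,3)
proof (induction A arbitrary: M rule: finite_induct)
  case empty then show ?case by blast
next
  case (insert b A)
  from insert.IH[OF insert.prems(1)] insert.prems(2) obtain M1 where
    M1: "M1 \<subseteq> M" "infinite M1"
      "\<forall>b\<in>A. \<forall>S\<in>ksubsets M1 d. \<forall>T\<in>ksubsets M1 d. \<bar>g b S - g b T\<bar> \<le> e"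
    by auto
  from ramsey_small_oscillation[OF M1(2), of d "g b" B, OF _ assms(4)] insert.prems(2) obtain M2 where
    M2: "M2 \<subseteq> M1" "infinite M2" "\<forall>S\<in>ksubsets M2 d. \<forall>T\<in>ksubsets M2 d. \<bar>g b S - g b T\<bar> \<le> e"
    by auto
  have "ksubsets M2 d \<subseteq> ksubsets M1 d" using M2(1) unfolding ksubsets_def by auto
  then show ?case using M1 M2 by (intro exI[of _ M2]) blast
qed

definition stable ::
  "(nat set \<Rightarrow> 'a::real_normed_vector) \<Rightarrow> nat \<Rightarrow> nat \<Rightarrow> real \<Rightarrow> nat set \<Rightarrow> bool" where
  "stable x k m e M \<longleftrightarrow> (\<forall>F G a. plegma m M k F \<longrightarrow> plegma m M k G \<longrightarrow>
      (\<forall>j\<in>{1..m}. \<bar>a j\<bar> \<le> 1) \<longrightarrow> \<bar>comb_norm x F m a - comb_norm x G m a\<bar> \<le> e)"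

lemma stableD:
  "stable x k m e M \<Longrightarrow> plegma m M k F \<Longrightarrow> plegma m M k G \<Longrightarrow> \<forall>j\<in>{1..m}. \<bar>a j\<bar> \<le> 1 \<Longrightarrow>
    \<bar>comb_norm x F m a - comb_norm x G m a\<bar> \<le> e"
  unfolding stable_def by blast

lemma stable_mono: "stable x k m e M \<Longrightarrow> M' \<subseteq> M \<Longrightarrow> stable x k m e M'"
  unfolding stable_def using plegma_mono by blast

text \<open>By homogeneity, stability controls coefficients bounded by any R > 0.\<close>
lemma stable_scaled:
  assumes "stable x k m e M" "plegma m M k F" "plegma m M k G" "R > 0" "\<forall>j\<in>{1..m}. \<bar>a j\<bar> \<le> R"
  shows "\<bar>comb_norm x F m a - comb_norm x G m a\<bar> \<le> R * e"
proof -
  define b where "b j = a j / R" for j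
  have a: "a = (\<lambda>j. R * b j)" unfolding b_def using assms(4) by auto
  have "\<forall>j\<in>{1..m}. \<bar>b j\<bar> \<le> 1" unfolding b_def using assms(4,5) by simp
  then have "\<bar>comb_norm x F m b - comb_norm x G m b\<bar> \<le> e"
    using assms(1-3) unfolding stable_def by blast
  moreover have "\<bar>comb_norm x F m a - comb_norm x G m a\<bar>
      = R * \<bar>comb_norm x F m b - comb_norm x G m b\<bar>"
    unfolding a comb_norm_scale using assms(4) by (simp add: abs_mult right_diff_distrib[symmetric])
  ultimately show ?thesis using assms(4) by simp
qed

definition grid :: "nat \<Rightarrow> real set" where
  "grid q = (\<lambda>r. real_of_int r / real q) ` {-int q..int q}"

lemma finite_grid: "finite (grid q)"
  unfolding grid_def by simp

lemma grid_bound: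
  assumes "q > 0" "y \<in> grid q"
  shows "\<bar>y\<bar> \<le> 1"
proof -
  from assms(2) obtain r where r: "r \<in> {-int q..int q}" "y = real_of_int r / real q"
    unfolding grid_def by auto
  then have "\<bar>real_of_int r\<bar> / real q \<le> real q / real q" by (auto intro: divide_right_mono)
  then show ?thesis using r(2) assms(1) by simp
qed

lemma grid_round:
  assumes "q > 0" "\<bar>y\<bar> \<le> 1"
  shows "real_of_int (round (y * q)) / real q \<in> grid q"
    "\<bar>y - real_of_int (round (y * q)) / real q\<bar> \<le> 1 / real q"
proof -
  let ?r = "round (y * q)"
  have r: "\<bar>real_of_int ?r - y * q\<bar> \<le> 1/2" by (rule of_int_round_abs_le)
  have "\<bar>y * q\<bar> \<le> q" using assms by (simp add: abs_mult mult_le_cancel_right1)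
  then have "real_of_int ?r < real q + 1" "real_of_int ?r > - real q - 1" using r by linarith+
  then have "?r \<le> int q" "?r \<ge> - int q" by linarith+
  then show "real_of_int ?r / real q \<in> grid q" unfolding grid_def by auto
  have "\<bar>y - real_of_int ?r / real q\<bar> = \<bar>y * q - real_of_int ?r\<bar> / q"
    using assms(1) by (simp add: field_simps)
  also have "\<dots> \<le> 1 / q"
    using r assms(1) by (intro divide_right_mono) (auto simp: abs_minus_commute)
  finally show "\<bar>y - real_of_int ?r / real q\<bar> \<le> 1 / real q" .
qed

text \<open>Stability on grid coefficients implies stability, provided the grid is fine enough:
  rounding the coefficients changes the norm of a plegma combination by at most e/3.
  Plegma families are compared through the (k*m)-subsets they are interlacings of.\<close>
lemma stable_from_grid:
  assumes "1 \<le> m" "\<forall>s\<in>ksubsets UNIV k. norm (x s) \<le> C"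
    and "q > 0" "real m * (1 / real q * C) \<le> e/3"
    and osc: "\<forall>b\<in>PiE {1..m} (\<lambda>_. grid q). \<forall>S\<in>ksubsets M (k*m). \<forall>T\<in>ksubsets M (k*m).
       \<bar>comb_norm x (interlace k (enum_fin S) m) m b - comb_norm x (interlace k (enum_fin T) m) m b\<bar>
         \<le> e/3"
  shows "stable x k m e M"
  unfolding stable_def
proof (intro allI impI)
  fix F G and a :: "nat \<Rightarrow> real"
  assume F: "plegma m M k F" and G: "plegma m M k G" and a: "\<forall>j\<in>{1..m}. \<bar>a j\<bar> \<le> 1"
  define b where "b = restrict (\<lambda>j. real_of_int (round (a j * q)) / real q) {1..m}"
  have b: "b \<in> PiE {1..m} (\<lambda>_. grid q)" "\<forall>j\<in>{1..m}. \<bar>a j - b j\<bar> \<le> 1 / real q"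
    using grid_round[OF assms(3)] a unfolding b_def by auto
  obtain SF where SF: "SF \<in> ksubsets M (k*m)" "\<forall>j\<in>{1..m}. F j = interlace k (enum_fin SF) m j"
    using plegma_as_interlace[OF F assms(1)] by blast
  obtain SG where SG: "SG \<in> ksubsets M (k*m)" "\<forall>j\<in>{1..m}. G j = interlace k (enum_fin SG) m j"
    using plegma_as_interlace[OF G assms(1)] by blast
  have "comb_norm x F m b = comb_norm x (interlace k (enum_fin SF) m) m b"
    "comb_norm x G m b = comb_norm x (interlace k (enum_fin SG) m) m b"
    using SF(2) SG(2) by (auto intro: comb_norm_cong)
  moreover have "\<bar>comb_norm x (interlace k (enum_fin SF) m) m b
      - comb_norm x (interlace k (enum_fin SG) m) m b\<bar> \<le> e/3"
    using osc b(1) SF(1) SG(1) by blast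
  moreover have "\<bar>comb_norm x F m a - comb_norm x F m b\<bar> \<le> e/3"
    using comb_norm_lipschitz[OF F assms(2) b(2)] assms(4) by (rule order.trans)
  moreover have "\<bar>comb_norm x G m a - comb_norm x G m b\<bar> \<le> e/3"
    using comb_norm_lipschitz[OF G assms(2) b(2)] assms(4) by (rule order.trans)
  ultimately show "\<bar>comb_norm x F m a - comb_norm x G m a\<bar> \<le> e" by linarith
qed

text \<open>On the finitely many grid coefficients, the norms are bounded functions of (k*m)-subsets,
  so Ramsey's theorem applies.\<close>
lemma exists_stable:
  assumes "1 \<le> k" "1 \<le> m" "e > 0" "infinite M" "\<forall>s\<in>ksubsets UNIV k. norm (x s) \<le> C"
  shows "\<exists>M'\<subseteq>M. infinite M' \<and> stable x k m e M'"
proof -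
  define q :: nat where "q = nat \<lceil>3*m*C/e\<rceil> + 1"
  have qpos: "q > 0" unfolding q_def by simp
  have "3*m*C/e \<le> real q" unfolding q_def by linarith
  then have "3 * real m * C \<le> real q * e" using assms(3) by (simp add: divide_le_eq)
  then have "real m * C / real q \<le> e/3" using qpos by (simp add: pos_divide_le_eq mult_ac)
  moreover have "real m * (1 / real q * C) = real m * C / real q" by simp
  ultimately have grid_err: "real m * (1 / real q * C) \<le> e/3" by linarith
  define A where "A = PiE {1..m} (\<lambda>_. grid q)"
  define g where "g b S = comb_norm x (interlace k (enum_fin S) m) m b" for b S
  have bounded: "\<forall>b\<in>A. \<forall>S::nat set. finite S \<and> card S = k*m \<longrightarrow> \<bar>g b S\<bar> \<le> m * (1 * C)"
  proof (intro ballI allI impI)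
    fix b and S :: "nat set" assume b: "b \<in> A" and S: "finite S \<and> card S = k*m"
    have "plegma m UNIV k (interlace k (enum_fin S) m)"
      using enum_fin_strict[of S "k*m"] S assms by (intro interlace_plegma) auto
    moreover have "\<forall>j\<in>{1..m}. \<bar>b j\<bar> \<le> 1"
      using b grid_bound[OF qpos] unfolding A_def by (auto simp: PiE_iff)
    ultimately have "g b S \<le> m * (1 * C)"
      unfolding g_def by (rule comb_norm_bound[OF _ assms(5)])
    moreover have "g b S \<ge> 0" unfolding g_def comb_norm_def by simp
    ultimately show "\<bar>g b S\<bar> \<le> m * (1 * C)" by simp
  qed
  have "finite A" unfolding A_def by (simp add: finite_PiE finite_grid)
  from ramsey_small_oscillation_finite[OF this assms(4) bounded, of "e/3"] assms(3)
  obtain M' where "M' \<subseteq> M" "infinite M'"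
    "\<forall>b\<in>A. \<forall>S\<in>ksubsets M' (k*m). \<forall>T\<in>ksubsets M' (k*m). \<bar>g b S - g b T\<bar> \<le> e/3"
    by auto
  moreover from this(3) have "stable x k m e M'"
    unfolding A_def g_def by (rule stable_from_grid[OF assms(2,5) qpos grid_err])
  ultimately show ?thesis by blast
qed

lemma exists_stable_upto:
  assumes "1 \<le> k" "e > 0" "infinite M" "\<forall>s\<in>ksubsets UNIV k. norm (x s) \<le> C"
  shows "\<exists>M'\<subseteq>M. infinite M' \<and> (\<forall>m\<in>{1..n}. stable x k m e M')"
proof (induction n)
  case 0 then show ?case using assms(3) by (intro exI[of _ M]) simp
next
  case (Suc n)
  then obtain M1 where M1: "M1 \<subseteq> M" "infinite M1" "\<forall>m\<in>{1..n}. stable x k m e M1" by blast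
  from exists_stable[OF assms(1) _ assms(2) M1(2) assms(4), of "Suc n"] obtain M2 where
    M2: "M2 \<subseteq> M1" "infinite M2" "stable x k (Suc n) e M2" by auto
  have "\<forall>m\<in>{1..Suc n}. stable x k m e M2"
  proof
    fix m assume "m \<in> {1..Suc n}"
    then consider "m \<in> {1..n}" | "m = Suc n" by fastforce
    then show "stable x k m e M2"
    proof cases
      case 1 then show ?thesis using M1(3) M2(1) stable_mono by blast
    qed (use M2(3) in simp)
  qed
  then show ?case using M1(1) M2(1,2) by (intro exI[of _ M2]) simp
qed


section \<open>Diagonalisation\<close>

definition diag_stable :: "(nat set \<Rightarrow> 'a::real_normed_vector) \<Rightarrow> nat \<Rightarrow> (nat \<Rightarrow> nat) \<Rightarrow> bool" where
  "diag_stable x k ds \<longleftrightarrow> strict_mono ds \<and>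
     (\<forall>n m. 1 \<le> m \<longrightarrow> m \<le> Suc n \<longrightarrow> stable x k m (1 / real (Suc n)) (ds ` {n..}))"

text \<open>Choose a decreasing sequence of infinite sets M_n, each stable for lengths \<le> n with
  error 1/n, and pick ds n \<in> M_(n+1) increasing; the n-th tail of ds lies in M_(n+1).\<close>
lemma exists_diag_stable:
  assumes "1 \<le> k" "\<forall>s\<in>ksubsets UNIV k. norm (x s) \<le> C"
  shows "\<exists>ds. diag_stable x k ds"
proof -
  let ?P = "\<lambda>n M. infinite M \<and> (\<forall>m\<in>{1..n}. stable x k m (1 / real n) M)"
  have "\<exists>Ms. \<forall>n. ?P n (Ms n) \<and> Ms (Suc n) \<subseteq> Ms n"
  proof (rule dependent_nat_choice)
    show "\<exists>M. ?P 0 M" by auto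
  next
    fix M n assume "?P n M"
    then show "\<exists>M'. ?P (Suc n) M' \<and> M' \<subseteq> M"
      using exists_stable_upto[OF assms(1) _ _ assms(2), of "1 / real (Suc n)" M "Suc n"] by auto
  qed
  then obtain Ms where Ms: "\<And>n. ?P n (Ms n)" "\<And>n. Ms (Suc n) \<subseteq> Ms n" by blast
  have Ms_anti: "Ms n' \<subseteq> Ms n" if "n \<le> n'" for n n'
    using lift_Suc_antimono_le[of Ms, OF Ms(2) that] .
  have "\<exists>ds. \<forall>n. ds n \<in> Ms (Suc n) \<and> ds n < ds (Suc n)"
  proof (rule dependent_nat_choice)
    show "\<exists>d. d \<in> Ms (Suc 0)" using Ms(1) by (metis finite.emptyI ex_in_conv)
  next
    fix d n
    show "\<exists>d'. d' \<in> Ms (Suc (Suc n)) \<and> d < d'"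
      using Ms(1)[of "Suc (Suc n)"] unfolding infinite_nat_iff_unbounded by blast
  qed
  then obtain ds where ds: "\<And>n. ds n \<in> Ms (Suc n)" "\<And>n. ds n < ds (Suc n)" by blast
  have tail: "ds ` {n..} \<subseteq> Ms (Suc n)" for n
  proof
    fix y assume "y \<in> ds ` {n..}"
    then obtain i where "n \<le> i" "y = ds i" by auto
    then show "y \<in> Ms (Suc n)" using ds(1)[of i] Ms_anti[of "Suc n" "Suc i"] by auto
  qed
  have "stable x k m (1 / real (Suc n)) (ds ` {n..})" if "1 \<le> m" "m \<le> Suc n" for n m
  proof -
    have "stable x k m (1 / real (Suc n)) (Ms (Suc n))" using Ms(1)[of "Suc n"] that by simp
    then show ?thesis using tail by (rule stable_mono)
  qed
  moreover have "strict_mono ds" using ds(2) by (simp add: strict_mono_Suc_iff)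
  ultimately have "diag_stable x k ds" unfolding diag_stable_def by simp
  then show ?thesis by blast
qed

lemma enumerate_range_strict_mono:
  fixes f :: "nat \<Rightarrow> nat"
  assumes "strict_mono f"
  shows "enumerate (range f) n = f n"
proof (induction n)
  case 0
  have "(LEAST y. y \<in> range f) = f 0"
    by (rule Least_equality) (auto simp: assms strict_mono_less_eq)
  then show ?case by (simp add: enumerate_0)
next
  case (Suc n)
  have inf: "infinite (range f)"
    using assms strict_mono_imp_inj_on range_inj_infinite by blast
  have "(LEAST y. y \<in> range f \<and> f n < y) = f (Suc n)"
    by (rule Least_equality) (auto simp: assms strict_mono_less strict_mono_less_eq Suc_le_eq)
  then show ?case using enumerate_Suc''[OF inf] Suc.IH by simp
qed

section \<open>The limit seminorm\<close>

definition diag_fam :: "nat \<Rightarrow> (nat \<Rightarrow> nat) \<Rightarrow> nat \<Rightarrow> nat \<Rightarrow> nat set" where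
  "diag_fam k ds n = interlace k (\<lambda>p. ds (n + p)) n"

lemma diag_fam_plegma:
  assumes "strict_mono ds" "1 \<le> k" "1 \<le> m" "m \<le> n'" "n \<le> n'"
  shows "plegma m (ds ` {n..}) k (diag_fam k ds n')"
proof -
  have "strict_on (k*n') (\<lambda>p. ds (n' + p))"
    unfolding strict_on_def using assms(1) by (simp add: strict_mono_less)
  moreover have "\<forall>p<k*n'. ds (n' + p) \<in> ds ` {n..}" using assms(5) by auto
  ultimately have "plegma n' (ds ` {n..}) k (diag_fam k ds n')"
    unfolding diag_fam_def using assms by (intro interlace_plegma) auto
  then show ?thesis using plegma_trunc assms(3,4) by blast
qed

definition approx_norm ::
  "(nat set \<Rightarrow> 'a::real_normed_vector) \<Rightarrow> nat \<Rightarrow> (nat \<Rightarrow> nat) \<Rightarrow> (nat \<Rightarrow> real) \<Rightarrow> nat \<Rightarrow> real" where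
  "approx_norm x k ds f n = comb_norm x (diag_fam k ds n) n (\<lambda>j. f (j - 1))"

lemma approx_norm_trunc:
  assumes "\<forall>i\<ge>m. f i = 0" "m \<le> n"
  shows "approx_norm x k ds f n = comb_norm x (diag_fam k ds n) m (\<lambda>j. f (j - 1))"
proof -
  have "(\<Sum>j=1..n. f (j-1) *\<^sub>R x (diag_fam k ds n j)) = (\<Sum>j=1..m. f (j-1) *\<^sub>R x (diag_fam k ds n j))"
    by (rule sum.mono_neutral_right) (use assms in auto)
  then show ?thesis unfolding approx_norm_def comb_norm_def by simp
qed

lemma approx_norm_osc:
  assumes "diag_stable x k ds" "1 \<le> k" "\<forall>i\<ge>m. f i = 0" "\<forall>i. \<bar>f i\<bar> \<le> R" "R > 0"
    and "1 \<le> m" "m \<le> n" "n \<le> n'"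
  shows "\<bar>approx_norm x k ds f n - approx_norm x k ds f n'\<bar> \<le> R / real (Suc n)"
proof -
  have ds: "strict_mono ds" using assms(1) unfolding diag_stable_def by blast
  have "stable x k m (1 / real (Suc n)) (ds ` {n..})"
    using assms(1,6,7) unfolding diag_stable_def by simp
  moreover have "plegma m (ds ` {n..}) k (diag_fam k ds n)" "plegma m (ds ` {n..}) k (diag_fam k ds n')"
    using diag_fam_plegma[OF ds assms(2,6)] assms(7,8) by auto
  ultimately have "\<bar>comb_norm x (diag_fam k ds n) m (\<lambda>j. f (j - 1))
      - comb_norm x (diag_fam k ds n') m (\<lambda>j. f (j - 1))\<bar> \<le> R * (1 / real (Suc n))"
    using assms(4,5) by (intro stable_scaled) auto
  then show ?thesis
    using approx_norm_trunc[OF assms(3), of n x k ds] approx_norm_trunc[OF assms(3), of n' x k ds]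
      assms(7,8) by simp
qed

lemma convergent_osc_bound:
  fixes s :: "nat \<Rightarrow> real"
  assumes "\<And>n n'. m \<le> n \<Longrightarrow> n \<le> n' \<Longrightarrow> \<bar>s n - s n'\<bar> \<le> R / real (Suc n)"
  shows "convergent s"
proof -
  have "Cauchy s"
  proof (rule metric_CauchyI)
    fix e :: real assume e: "e > 0"
    obtain n0 where n0: "\<bar>R\<bar> / e < real n0" using reals_Archimedean2 by blast
    define n1 where "n1 = max n0 m"
    have "\<bar>R\<bar> / real (Suc n1) < e"
    proof -
      have "\<bar>R\<bar> / e < real (Suc n1)" using n0 unfolding n1_def by simp
      then show ?thesis using e by (simp add: divide_less_eq mult.commute)
    qed
    moreover have "dist (s p) (s p') \<le> \<bar>R\<bar> / real (Suc n1)" if "p \<ge> n1" "p' \<ge> n1" for p p'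
    proof -
      have "\<bar>s p - s p'\<bar> \<le> R / real (Suc (min p p'))"
        using assms[of p p'] assms[of p' p] that unfolding n1_def
        by (cases "p \<le> p'") (auto simp: abs_minus_commute min_def)
      also have "\<dots> \<le> \<bar>R\<bar> / real (Suc n1)"
        using that by (intro frac_le) auto
      finally show ?thesis by (simp add: dist_real_def)
    qed
    ultimately show "\<exists>M. \<forall>p\<ge>M. \<forall>p'\<ge>M. dist (s p) (s p') < e"
      by (meson le_less_trans)
  qed
  then show ?thesis by (simp add: Cauchy_convergent_iff)
qed

text \<open>For f \<in> c00 the approximations converge: scale f to coefficients bounded by R and use
  the oscillation bound.\<close>
lemma approx_norm_convergent:
  assumes "diag_stable x k ds" "1 \<le> k" "f \<in> c00"
  shows "convergent (approx_norm x k ds f)"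
proof -
  obtain m0 where "{i. f i \<noteq> 0} \<subseteq> {..<m0}"
    using assms(3) finite_nat_bounded unfolding c00_def by blast
  then have supp: "\<forall>i\<ge>Suc m0. f i = 0" by force
  define R where "R = 1 + (\<Sum>i<Suc m0. \<bar>f i\<bar>)"
  have "R > 0" unfolding R_def by (simp add: add_pos_nonneg sum_nonneg)
  have "\<bar>f i\<bar> \<le> R" for i
  proof (cases "i < Suc m0")
    case True
    then have "\<bar>f i\<bar> \<le> (\<Sum>i<Suc m0. \<bar>f i\<bar>)" by (intro member_le_sum) auto
    then show ?thesis unfolding R_def by simp
  qed (use supp \<open>R > 0\<close> in simp)
  then show ?thesis
    using approx_norm_osc[OF assms(1,2) supp _ \<open>R > 0\<close>] by (intro convergent_osc_bound) auto
qed

lemma c00_add: "f \<in> c00 \<Longrightarrow> g \<in> c00 \<Longrightarrow> (\<lambda>i. f i + g i) \<in> c00"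
proof -
  have "{i. f i + g i \<noteq> 0} \<subseteq> {i. f i \<noteq> 0} \<union> {i. g i \<noteq> 0}" by auto
  then show "f \<in> c00 \<Longrightarrow> g \<in> c00 \<Longrightarrow> (\<lambda>i. f i + g i) \<in> c00"
    unfolding c00_def by (auto intro: finite_subset)
qed

lemma seminorm_c00_limit:
  assumes lim: "\<And>f. f \<in> c00 \<Longrightarrow> (\<lambda>n. S n f) \<longlonglongrightarrow> N f"
    and nonneg: "\<And>n f. 0 \<le> S n f"
    and homog: "\<And>n c f. S n (\<lambda>i. c * f i) = \<bar>c\<bar> * S n f"
    and subadd: "\<And>n f g. S n (\<lambda>i. f i + g i) \<le> S n f + S n g"
  shows "seminorm_c00 N"
  unfolding seminorm_c00_def
proof (intro conjI ballI allI)
  fix f assume f: "f \<in> c00"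
  show "0 \<le> N f" using lim[OF f] by (rule LIMSEQ_le_const) (simp add: nonneg)
next
  fix f c assume f: "f \<in> c00"
  have "c * f i = 0" if "f i = 0" for i using that by simp
  then have "(\<lambda>i. c * f i) \<in> c00" using f unfolding c00_def by (auto intro: finite_subset)
  moreover have "(\<lambda>n. S n (\<lambda>i. c * f i)) \<longlonglongrightarrow> \<bar>c\<bar> * N f"
    unfolding homog using lim[OF f] by (rule tendsto_mult_left)
  ultimately show "N (\<lambda>i. c * f i) = \<bar>c\<bar> * N f" using lim LIMSEQ_unique by blast
next
  fix f g assume f: "f \<in> c00" and g: "g \<in> c00"
  show "N (\<lambda>i. f i + g i) \<le> N f + N g"
    using lim[OF c00_add[OF f g]] tendsto_add[OF lim[OF f] lim[OF g]] by (rule LIMSEQ_le) (simp add: subadd)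
qed

lemma approx_norm_seminorm:
  assumes "diag_stable x k ds" "1 \<le> k"
  shows "seminorm_c00 (\<lambda>f. lim (approx_norm x k ds f))"
proof (rule seminorm_c00_limit)
  fix f :: "nat \<Rightarrow> real" assume "f \<in> c00"
  then show "(\<lambda>n. approx_norm x k ds f n) \<longlonglongrightarrow> lim (approx_norm x k ds f)"
    using approx_norm_convergent[OF assms] convergent_LIMSEQ_iff by auto
next
  show "0 \<le> approx_norm x k ds f n" for n f
    unfolding approx_norm_def comb_norm_def by simp
  show "approx_norm x k ds (\<lambda>i. c * f i) n = \<bar>c\<bar> * approx_norm x k ds f n" for n c f
    unfolding approx_norm_def using comb_norm_scale[of x _ n c] by simp
  show "approx_norm x k ds (\<lambda>i. f i + g i) n \<le> approx_norm x k ds f n + approx_norm x k ds g n" for n f g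
    unfolding approx_norm_def using comb_norm_add by simp
qed

text \<open>The spreading model estimate: a plegma family in range ds starting at or beyond the l-th
  element lies in the (l-1)-th tail, which is (m, 1/l)-stable, and so do the diagonal families
  defining N; hence their norms are 1/l-close to N.\<close>
lemma spreading_estimate:
  assumes "diag_stable x k ds" "1 \<le> k"
    and "1 \<le> m" "m \<le> l" "plegma m (range ds) k F" "nth_el (range ds) l \<le> elem (F 1) 1"
    and "\<forall>j\<in>{1..m}. \<bar>a j\<bar> \<le> 1"
  shows "\<bar>norm (\<Sum>j=1..m. a j *\<^sub>R x (F j)) - lim (approx_norm x k ds (comb_e m a))\<bar> \<le> 1 / real l"
proof -
  have ds: "strict_mono ds" using assms(1) unfolding diag_stable_def by blast
  define T where "T = ds ` {l - 1..}"
  have l: "l = Suc (l - 1)" using assms(3,4) by simp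
  have "{y \<in> range ds. ds (l - 1) \<le> y} = T"
    unfolding T_def using strict_mono_less_eq[OF ds] by auto
  moreover have "nth_el (range ds) l = ds (l - 1)"
    unfolding nth_el_def using enumerate_range_strict_mono[OF ds] by simp
  ultimately have F: "plegma m T k F"
    using plegma_above[OF assms(5,3,2)] assms(6) by metis
  have stab: "stable x k m (1 / real l) T"
    using assms(1,3,4) l unfolding diag_stable_def T_def by (metis of_nat_Suc)
  define f where "f = comb_e m a"
  have supp: "\<forall>i\<ge>m. f i = 0" and coeff: "\<forall>j\<in>{1..m}. f (j - 1) = a j"
    unfolding f_def comb_e_def by auto
  have "{i. f i \<noteq> 0} \<subseteq> {..<m}" using supp by (auto simp: not_less[symmetric])
  then have "f \<in> c00" unfolding c00_def using finite_subset finite_lessThan by blast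
  have close: "\<bar>comb_norm x F m a - approx_norm x k ds f n\<bar> \<le> 1 / real l" if "n \<ge> l" for n
  proof -
    have "m \<le> n" using assms(4) that by simp
    then have "approx_norm x k ds f n = comb_norm x (diag_fam k ds n) m (\<lambda>j. f (j - 1))"
      by (rule approx_norm_trunc[OF supp])
    also have "\<dots> = comb_norm x (diag_fam k ds n) m a"
      using coeff by (intro comb_norm_cong) auto
    finally have "approx_norm x k ds f n = comb_norm x (diag_fam k ds n) m a" .
    moreover have "plegma m T k (diag_fam k ds n)"
      unfolding T_def using diag_fam_plegma[OF ds assms(2,3) \<open>m \<le> n\<close>] that by simp
    ultimately show ?thesis using stableD[OF stab F _ assms(7)] by simp
  qed
  have "(\<lambda>n. \<bar>comb_norm x F m a - approx_norm x k ds f n\<bar>)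
      \<longlonglongrightarrow> \<bar>comb_norm x F m a - lim (approx_norm x k ds f)\<bar>"
    using approx_norm_convergent[OF assms(1,2) \<open>f \<in> c00\<close>]
    by (intro tendsto_intros) (simp add: convergent_LIMSEQ_iff)
  then have "\<bar>comb_norm x F m a - lim (approx_norm x k ds f)\<bar> \<le> 1 / real l"
    by (rule LIMSEQ_le_const2) (use close in blast)
  then show ?thesis unfolding comb_norm_def f_def .
qed

lemma diag_stable_generates:
  assumes "diag_stable x k ds" "1 \<le> k"
  shows "generates_ksm x (range ds) k (\<lambda>f. lim (approx_norm x k ds f))"
  unfolding generates_ksm_def
proof (intro exI conjI allI impI)
  show "0 < 2 / real (Suc n)" for n by simp
  show "(\<lambda>n. 2 / real (Suc n)) \<longlonglongrightarrow> 0"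
    using tendsto_mult[OF tendsto_const LIMSEQ_inverse_real_of_nat, of 2] by (simp add: divide_inverse)
next
  fix l m F and a :: "nat \<Rightarrow> real"
  assume "1 \<le> m \<and> m \<le> l \<and> plegma m (range ds) k F \<and> nth_el (range ds) l \<le> elem (F 1) 1 \<and>
    (\<forall>j\<in>{1..m}. \<bar>a j\<bar> \<le> 1)"
  then have H: "1 \<le> m" "m \<le> l" "plegma m (range ds) k F" "nth_el (range ds) l \<le> elem (F 1) 1"
    "\<forall>j\<in>{1..m}. \<bar>a j\<bar> \<le> 1" by auto
  have "real (Suc l) \<le> 2 * real l" using H(1,2) by simp
  then have "1 / real l \<le> 2 / real (Suc l)" using H(1,2) by (simp add: field_simps)
  with spreading_estimate[OF assms H]
  show "\<bar>norm (\<Sum>j=1..m. a j *\<^sub>R x (F j)) - lim (approx_norm x k ds (comb_e m a))\<bar>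
      \<le> 2 / real (Suc l)" by (rule order.trans)
qed

theorem mainTheorem4:
  fixes x :: "nat set \<Rightarrow> 'a::banach" and k :: nat
  assumes "k \<ge> 1"
    and "\<exists>C. \<forall>s\<in>ksubsets UNIV k. norm (x s) \<le> C"
  shows "\<exists>M. M \<subseteq> UNIV \<and> infinite M \<and>
           (\<exists>N. seminorm_c00 N \<and> generates_ksm x M k N)"
proof -
  from assms(2) obtain C where "\<forall>s\<in>ksubsets UNIV k. norm (x s) \<le> C" by blast
  from exists_diag_stable[OF assms(1) this] obtain ds where ds: "diag_stable x k ds" by auto
  then have "infinite (range ds)"
    unfolding diag_stable_def using strict_mono_imp_inj_on range_inj_infinite by blast
  moreover note approx_norm_seminorm[OF ds assms(1)] diag_stable_generates[OF ds assms(1)]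
  ultimately show ?thesis by (intro exI[of _ "range ds"]) blast
qed

end
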